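(* Let $n\ge1$, $k\ge0$ be integers and define the $n\times n$ matrices $M_1(n,k)=\big(\mathcal P^+_{i+j+1}(k,0)\big)_{0\le i,j\le n-1}$ and $MP_1(n,k)=\big(\sum_{l\ge0}\mathcal P^+_{i+j+1}(k,l)\big)_{0\le i,j\le n-1}$. Then $$A(n)\cdot MP_1(n,k)=M_1(n,k)+C_1(n,k),$$ where $C_1(n,k)=(C_{i,j})_{0\le i,j\le n-1}$ has $C_{i,j}=0$ for $i\le n-2$ and $C_{n-1,j}=(xy)^{n-1}\sum_{l\ge0}\mathcal P_{j+1}(0,n-k+l)$.
   Context: Three-step paths consist of up-steps $(1,1)$, level steps $(1,0)$ and down-steps $(1,-1)$. Weights: $w((1,1))=1$, $w((1,0))=x+y$, $w((1,-1))=xy$; a path's weight is the product of its step weights. $\mathcal P_n(k,l)$ is the sum of weights of all three-step paths from $(0,k)$ to $(n,l)$; $\mathcal P^+_n(k,l)$ the same restricted to paths never running below the $x$-axis. The matrix $A(n)=(A_{n,i,j})_{0\le i,j\le n-1}$ is defined by $A_{n,i,j}=\frac{(1+x)(1+y)}{xy}$ if $i=j<n-1$; $-\frac1{xy}$ if $i=j-1<n-1$; $A_{n,n-1,n-1}=\frac{xy-(n-1)(x+y)}{xy}$; for $j<n-1$, $$A_{n,n-1,j}=\frac{(-1)^{n+j}}{xy}\sum_{l=j}^{n}\left(\binom lj\binom{n+j-1-l}{j}x^{l-j}y^{n-1-l}+\binom lj\binom{n+j-l}{j}x^{l-j}y^{n-l}\right);$$ and $0$ otherwise (binomial coefficients $\binom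 ab=0$ if $b<0$ or $a<b$). *)

theory Defs
  imports Main "HOL-Library.Groups_Big_Fun"
begin

text \<open>Three-step paths: a path of length N is a list of steps in {1,0,-1}
  (heights change by the step); weights w(up)=1, w(level)=x+y, w(down)=x*y.\<close>

definition step_wt :: "'a::field \<Rightarrow> 'a \<Rightarrow> int \<Rightarrow> 'a" where
  "step_wt x y s = (if s = 1 then 1 else if s = 0 then x + y else x * y)"

definition path_wt :: "'a::field \<Rightarrow> 'a \<Rightarrow> int list \<Rightarrow> 'a" where
  "path_wt x y ss = prod_list (map (step_wt x y) ss)"

definition paths :: "nat \<Rightarrow> int \<Rightarrow> int \<Rightarrow> int list set" where
  "paths N k l = {ss. set ss \<subseteq> {-1, 0, 1} \<and> length ss = N \<and> k + sum_list ss = l}"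

definition paths_plus :: "nat \<Rightarrow> int \<Rightarrow> int \<Rightarrow> int list set" where
  "paths_plus N k l = {ss \<in> paths N k l. \<forall>i \<le> N. k + sum_list (take i ss) \<ge> 0}"

definition PP :: "'a::field \<Rightarrow> 'a \<Rightarrow> nat \<Rightarrow> int \<Rightarrow> int \<Rightarrow> 'a" where
  "PP x y N k l = (\<Sum>ss\<in>paths N k l. path_wt x y ss)"

definition PPplus :: "'a::field \<Rightarrow> 'a \<Rightarrow> nat \<Rightarrow> int \<Rightarrow> int \<Rightarrow> 'a" where
  "PPplus x y N k l = (\<Sum>ss\<in>paths_plus N k l. path_wt x y ss)"

definition ibinom :: "int \<Rightarrow> int \<Rightarrow> nat" where
  "ibinom a b = (if b < 0 \<or> a < b then 0 else nat a choose nat b)"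

definition Amat :: "'a::field \<Rightarrow> 'a \<Rightarrow> nat \<Rightarrow> nat \<Rightarrow> nat \<Rightarrow> 'a" where
  "Amat x y n i j =
    (if i = j \<and> i < n - 1 then (1 + x) * (1 + y) / (x * y)
     else if j = i + 1 \<and> i < n - 1 then - 1 / (x * y)
     else if i = n - 1 \<and> j = n - 1 then (x * y - of_nat (n - 1) * (x + y)) / (x * y)
     else if i = n - 1 \<and> j < n - 1 then
       (-1) ^ (n + j) / (x * y) *
       (\<Sum>l = j..n.
          of_nat (ibinom (int l) (int j) * ibinom (int n + int j - 1 - int l) (int j))
            * x powi (int l - int j) * y powi (int n - 1 - int l)
        + of_nat (ibinom (int l) (int j) * ibinom (int n + int j - int l) (int j))
            * x powi (int l - int j) * y powi (int n - int l))
     else 0)"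

end

theory Submission
  imports Defs "HOL-Computational_Algebra.Formal_Power_Series"
begin

text \<open>All path weights are sums over step lists and obey the first-step recursion
  \<open>F (N + 1) k = F N (k + 1) + (x + y) F N k + x y F N (k - 1)\<close>. The rows \<open>i < n - 1\<close> of
  \<open>A(n)\<close> amount to the identity \<open>T (N + 1) k = (1 + x) (1 + y) T N k - x y P\<^sup>+\<^sub>N(k, 0)\<close> for the
  total weight \<open>T N k\<close> of nonnegative paths of length \<open>N\<close>. The entries of the last row of
  \<open>x y A(n)\<close> are signed sums of the coefficients \<open>h s r\<close> of \<open>t ^ r\<close> in
  \<open>((1 - x t) (1 - y t)) ^ (-s)\<close>; their recursion in \<open>s\<close> shows that the alternating convolution
  \<open>\<Sum>m\<le>n. (-1) ^ (n + m) h (m + 1) (n - m) T m k\<close> grows by \<open>(x y) ^ n [n \<le> k]\<close> from \<open>n - 1\<close>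
  to \<open>n\<close>, which settles the last row when the path lengths are \<open>m\<close> instead of \<open>m + j + 1\<close>.
  Lengthening all paths, the defect of the last row obeys the same first-step recursion as the
  weight of unrestricted paths ending at height \<open>\<ge> n\<close>, and both vanish at height \<open>-1\<close> as long as
  the added length is at most \<open>n\<close>.\<close>

unbundle fps_syntax

definition step_lists :: "nat \<Rightarrow> int list set" where
  "step_lists N = {ss. set ss \<subseteq> {-1, 0, 1} \<and> length ss = N}"

lemma finite_step_lists: "finite (step_lists N)"
  unfolding step_lists_def by (rule finite_lists_length_eq) simp

lemma step_lists_0: "step_lists 0 = {[]}"
  unfolding step_lists_def by auto

lemma sum_step_lists_Suc:
  "(\<Sum>ss\<in>step_lists (Suc N). f ss) =
     (\<Sum>ss\<in>step_lists N. f ((-1) # ss)) + (\<Sum>ss\<in>step_lists N. f (0 # ss))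
       + (\<Sum>ss\<in>step_lists N. f (1 # ss))"
proof -
  have split: "step_lists (Suc N) = (\<lambda>(s, ss). s # ss) ` ({-1, 0, 1} \<times> step_lists N)"
    unfolding step_lists_def by (auto simp: length_Suc_conv image_iff)
  have inj: "inj_on (\<lambda>(s, ss). s # ss) ({-1, 0, 1 :: int} \<times> step_lists N)"
    by (auto simp: inj_on_def)
  have "(\<Sum>ss\<in>step_lists (Suc N). f ss) = (\<Sum>s\<in>{-1, 0, 1::int}. \<Sum>ss\<in>step_lists N. f (s # ss))"
    unfolding split sum.reindex[OF inj] by (simp add: sum.cartesian_product case_prod_beta)
  then show ?thesis by (simp add: add.assoc)
qed

lemma sum_list_step_lists_bounds:
  "ss \<in> step_lists N \<Longrightarrow> - int N \<le> sum_list ss \<and> sum_list ss \<le> int N"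
proof (induction ss arbitrary: N)
  case (Cons s ss)
  then show ?case by (cases N) (auto simp: step_lists_def)
qed (simp add: step_lists_def)

definition stays_nonneg :: "int \<Rightarrow> int list \<Rightarrow> bool" where
  "stays_nonneg k ss \<longleftrightarrow> (\<forall>i\<le>length ss. 0 \<le> k + sum_list (take i ss))"

lemma stays_nonneg_Nil [simp]: "stays_nonneg k [] \<longleftrightarrow> 0 \<le> k"
  by (simp add: stays_nonneg_def)

lemma stays_nonneg_Cons [simp]:
  "stays_nonneg k (s # ss) \<longleftrightarrow> 0 \<le> k \<and> stays_nonneg (k + s) ss"
  unfolding stays_nonneg_def by (simp add: All_less_Suc2 flip: less_Suc_eq_le add: add.assoc)

lemma stays_nonneg_end: "stays_nonneg k ss \<Longrightarrow> 0 \<le> k + sum_list ss"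
  unfolding stays_nonneg_def by (metis order_refl take_all)

lemma not_stays_nonneg_neg: "k < 0 \<Longrightarrow> \<not> stays_nonneg k ss"
  by (cases ss) auto

lemma path_wt_Nil [simp]: "path_wt x y [] = 1"
  by (simp add: path_wt_def)

lemma path_wt_Cons [simp]: "path_wt x y (s # ss) = step_wt x y s * path_wt x y ss"
  by (simp add: path_wt_def)

lemma step_wt_simps [simp]:
  "step_wt x y 1 = 1" "step_wt x y 0 = x + y" "step_wt x y (-1) = x * y"
  by (simp_all add: step_wt_def)

lemma PP_eq_sum_step_lists:
  "PP x y N k l = (\<Sum>ss\<in>step_lists N. if k + sum_list ss = l then path_wt x y ss else 0)"
proof -
  have "paths N k l = {ss \<in> step_lists N. k + sum_list ss = l}"
    by (auto simp: paths_def step_lists_def)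
  then show ?thesis unfolding PP_def by (simp add: sum.inter_filter finite_step_lists)
qed

lemma PPplus_eq_sum_step_lists:
  "PPplus x y N k l =
     (\<Sum>ss\<in>step_lists N. if stays_nonneg k ss \<and> k + sum_list ss = l then path_wt x y ss else 0)"
proof -
  have "paths_plus N k l = {ss \<in> step_lists N. stays_nonneg k ss \<and> k + sum_list ss = l}"
    by (auto simp: paths_plus_def paths_def step_lists_def stays_nonneg_def)
  then show ?thesis unfolding PPplus_def by (simp add: sum.inter_filter finite_step_lists)
qed

definition PPplus_total :: "'a::field \<Rightarrow> 'a \<Rightarrow> nat \<Rightarrow> int \<Rightarrow> 'a" where
  "PPplus_total x y N k = (\<Sum>ss\<in>step_lists N. if stays_nonneg k ss then path_wt x y ss else 0)"

definition PP_above :: "'a::field \<Rightarrow> 'a \<Rightarrow> nat \<Rightarrow> int \<Rightarrow> int \<Rightarrow> 'a" where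
  "PP_above x y N k l = (\<Sum>ss\<in>step_lists N. if l \<le> k + sum_list ss then path_wt x y ss else 0)"

lemma Sum_any_nat_levels:
  fixes f :: "'b \<Rightarrow> int" and g :: "'b \<Rightarrow> 'a::comm_monoid_add"
  assumes "finite S"
  shows "Sum_any (\<lambda>l::nat. \<Sum>s\<in>S. if f s = int l then g s else 0)
       = (\<Sum>s\<in>S. if 0 \<le> f s then g s else 0)"
proof -
  have "Sum_any (\<lambda>l::nat. \<Sum>s\<in>S. if f s = int l then g s else 0)
      = (\<Sum>l\<in>nat ` f ` S. \<Sum>s\<in>S. if f s = int l then g s else 0)"
  proof (rule Sum_any.expand_superset)
    show "{l. (\<Sum>s\<in>S. if f s = int l then g s else 0) \<noteq> 0} \<subseteq> nat ` f ` S"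
    proof
      fix l assume "l \<in> {l. (\<Sum>s\<in>S. if f s = int l then g s else 0) \<noteq> 0}"
      then obtain s where "s \<in> S" "(if f s = int l then g s else 0) \<noteq> 0"
        by (blast dest: sum.not_neutral_contains_not_neutral)
      then show "l \<in> nat ` f ` S" by (force split: if_splits)
    qed
  qed (use assms in simp)
  also have "\<dots> = (\<Sum>s\<in>S. \<Sum>l\<in>nat ` f ` S. if f s = int l then g s else 0)"
    by (rule sum.swap)
  also have "\<dots> = (\<Sum>s\<in>S. if 0 \<le> f s then g s else 0)"
  proof (rule sum.cong[OF refl])
    fix s assume s: "s \<in> S"
    have level: "\<And>l. f s = int l \<longleftrightarrow> nat (f s) = l \<and> 0 \<le> f s"
      by auto
    have "(\<Sum>l\<in>nat ` f ` S. if f s = int l then g s else 0)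
        = (\<Sum>l\<in>nat ` f ` S. if nat (f s) = l then (if 0 \<le> f s then g s else 0) else 0)"
      by (intro sum.cong[OF refl]) (simp add: level)
    also have "\<dots> = (if 0 \<le> f s then g s else 0)"
      using s assms by simp
    finally show "(\<Sum>l\<in>nat ` f ` S. if f s = int l then g s else 0) = (if 0 \<le> f s then g s else 0)" .
  qed
  finally show ?thesis .
qed

lemma Sum_any_PPplus: "Sum_any (\<lambda>l::nat. PPplus x y N k (int l)) = PPplus_total x y N k"
proof -
  have "Sum_any (\<lambda>l::nat. PPplus x y N k (int l))
      = Sum_any (\<lambda>l::nat. \<Sum>ss\<in>step_lists N.
          if k + sum_list ss = int l then (if stays_nonneg k ss then path_wt x y ss else 0) else 0)"
    unfolding PPplus_eq_sum_step_lists by (intro Sum_any.cong sum.cong) auto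
  also have "\<dots> = PPplus_total x y N k"
    unfolding Sum_any_nat_levels[OF finite_step_lists] PPplus_total_def
    by (intro sum.cong) (auto dest: stays_nonneg_end)
  finally show ?thesis .
qed

lemma Sum_any_PP: "Sum_any (\<lambda>l::nat. PP x y N 0 (a - k + int l)) = PP_above x y N k a"
proof -
  have "Sum_any (\<lambda>l::nat. PP x y N 0 (a - k + int l))
      = Sum_any (\<lambda>l::nat. \<Sum>ss\<in>step_lists N.
          if k + sum_list ss - a = int l then path_wt x y ss else 0)"
    unfolding PP_eq_sum_step_lists by (intro Sum_any.cong sum.cong) auto
  also have "\<dots> = PP_above x y N k a"
    unfolding Sum_any_nat_levels[OF finite_step_lists] PP_above_def
    by (intro sum.cong) auto
  finally show ?thesis .
qed

lemma PPplus_Suc: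
  "0 \<le> k \<Longrightarrow> PPplus x y (Suc N) k l
     = PPplus x y N (k + 1) l + (x + y) * PPplus x y N k l + x * y * PPplus x y N (k - 1) l"
  unfolding PPplus_eq_sum_step_lists sum_step_lists_Suc
  by (simp add: sum_distrib_left if_distrib algebra_simps cong: if_cong)

lemma PPplus_total_Suc:
  "0 \<le> k \<Longrightarrow> PPplus_total x y (Suc N) k
     = PPplus_total x y N (k + 1) + (x + y) * PPplus_total x y N k
       + x * y * PPplus_total x y N (k - 1)"
  unfolding PPplus_total_def sum_step_lists_Suc
  by (simp add: sum_distrib_left if_distrib algebra_simps cong: if_cong)

lemma PP_above_Suc:
  "PP_above x y (Suc N) k l
     = PP_above x y N (k + 1) l + (x + y) * PP_above x y N k l + x * y * PP_above x y N (k - 1) l"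
  unfolding PP_above_def sum_step_lists_Suc
  by (simp add: sum_distrib_left if_distrib algebra_simps cong: if_cong)

lemma PPplus_neg: "k < 0 \<Longrightarrow> PPplus x y N k l = 0"
  by (simp add: PPplus_eq_sum_step_lists not_stays_nonneg_neg)

lemma PPplus_total_neg: "k < 0 \<Longrightarrow> PPplus_total x y N k = 0"
  by (simp add: PPplus_total_def not_stays_nonneg_neg)

lemma PPplus_0: "PPplus x y 0 k l = (if 0 \<le> k \<and> k = l then 1 else 0)"
  unfolding PPplus_eq_sum_step_lists step_lists_0 by simp

lemma PPplus_total_0: "PPplus_total x y 0 k = (if 0 \<le> k then 1 else 0)"
  by (simp add: PPplus_total_def step_lists_0)

lemma PP_above_0: "PP_above x y 0 k l = (if l \<le> k then 1 else 0)"
  by (simp add: PP_above_def step_lists_0)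

lemma PP_above_unreachable: "k + int N < l \<Longrightarrow> PP_above x y N k l = 0"
  unfolding PP_above_def
  by (rule sum.neutral) (auto dest: sum_list_step_lists_bounds)

text \<open>Appending a step to a nonnegative path multiplies its weight by
  \<open>(1 + x) * (1 + y) = 1 + (x + y) + x * y\<close>, except that a down step is forbidden at height 0.\<close>

lemma PPplus_total_Suc_via_zero:
  "PPplus_total x y (Suc N) k = (1 + x) * (1 + y) * PPplus_total x y N k - x * y * PPplus x y N k 0"
proof (induction N arbitrary: k)
  case 0
  show ?case
    by (cases "k < 0")
      (simp_all add: PPplus_total_neg PPplus_neg PPplus_total_Suc PPplus_total_0 PPplus_0 algebra_simps)
next
  case (Suc N)
  show ?case
  proof (cases "k < 0")
    case True
    then show ?thesis by (simp add: PPplus_total_neg PPplus_neg)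
  next
    case False
    then have k: "0 \<le> k" by simp
    have "PPplus_total x y (Suc (Suc N)) k
        = (1 + x) * (1 + y) * (PPplus_total x y N (k + 1) + (x + y) * PPplus_total x y N k
             + x * y * PPplus_total x y N (k - 1))
          - x * y * (PPplus x y N (k + 1) 0 + (x + y) * PPplus x y N k 0
             + x * y * PPplus x y N (k - 1) 0)"
      unfolding PPplus_total_Suc[OF k, of x y "Suc N"] Suc.IH by (simp add: algebra_simps)
    then show ?thesis
      using k by (simp add: PPplus_total_Suc PPplus_Suc)
  qed
qed

definition neg_binomial_fps :: "'a::field \<Rightarrow> nat \<Rightarrow> 'a fps" where
  "neg_binomial_fps x s = Abs_fps (\<lambda>r. of_nat ((r + s - 1) choose r) * x ^ r)"

lemma neg_binomial_fps_nth: "neg_binomial_fps x s $ r = of_nat ((r + s - 1) choose r) * x ^ r"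
  by (simp add: neg_binomial_fps_def)

lemma neg_binomial_fps_0: "neg_binomial_fps x 0 = 1"
  by (rule fps_ext) (auto simp: neg_binomial_fps_nth binomial_eq_0)

lemma neg_binomial_fps_Suc:
  "(1 - fps_const x * fps_X) * neg_binomial_fps x (Suc s) = neg_binomial_fps x s"
proof (rule fps_ext)
  fix r
  have expand: "(1 - fps_const x * fps_X) * neg_binomial_fps x (Suc s)
      = neg_binomial_fps x (Suc s) - fps_const x * (fps_X * neg_binomial_fps x (Suc s))"
    by (simp add: algebra_simps)
  show "((1 - fps_const x * fps_X) * neg_binomial_fps x (Suc s)) $ r = neg_binomial_fps x s $ r"
  proof (cases r)
    case 0
    then show ?thesis by (simp add: expand neg_binomial_fps_nth)
  next
    case (Suc r')
    have "(Suc r' + s) choose Suc r' = ((r' + s) choose r') + ((r' + s) choose Suc r')"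
      by simp
    then have "of_nat ((Suc r' + s) choose Suc r') * x ^ Suc r' - x * (of_nat ((r' + s) choose r') * x ^ r')
        = of_nat ((r' + s) choose Suc r') * x ^ Suc r'"
      by (simp add: algebra_simps)
    then show ?thesis using Suc by (simp add: expand neg_binomial_fps_nth)
  qed
qed

text \<open>\<open>hcoef x y s r\<close> is the coefficient of \<open>t ^ r\<close> in \<open>((1 - x t) (1 - y t)) ^ (-s)\<close>,
  extended by zero to negative \<open>r\<close>.\<close>

definition hcoef :: "'a::field \<Rightarrow> 'a \<Rightarrow> nat \<Rightarrow> int \<Rightarrow> 'a" where
  "hcoef x y s r = (if r < 0 then 0 else (neg_binomial_fps x s * neg_binomial_fps y s) $ nat r)"

lemma hcoef_neg: "r < 0 \<Longrightarrow> hcoef x y s r = 0"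
  by (simp add: hcoef_def)

lemma hcoef_0: "hcoef x y 0 r = (if r = 0 then 1 else 0)"
  by (simp add: hcoef_def neg_binomial_fps_0)

lemma hcoef_at_0: "hcoef x y s 0 = 1"
  by (simp add: hcoef_def neg_binomial_fps_nth)

lemma hcoef_at_1: "hcoef x y s 1 = of_nat s * (x + y)"
  by (simp add: hcoef_def neg_binomial_fps_nth algebra_simps)

lemma hcoef_Suc:
  "hcoef x y s r = hcoef x y (Suc s) r - (x + y) * hcoef x y (Suc s) (r - 1)
     + x * y * hcoef x y (Suc s) (r - 2)"
proof (cases "r < 0")
  case True
  then show ?thesis by (simp add: hcoef_def)
next
  case False
  then obtain t where t: "r = int t" by (metis nonneg_int_cases not_less)
  define H where "H s = neg_binomial_fps x s * neg_binomial_fps y s" for s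
  have "(1 - fps_const x * fps_X) * (1 - fps_const y * fps_X) * H (Suc s) = H s"
    unfolding H_def by (metis (no_types, lifting) mult.assoc mult.left_commute neg_binomial_fps_Suc)
  then have "H s = H (Suc s) - fps_const (x + y) * (fps_X * H (Suc s))
      + fps_const (x * y) * (fps_X ^ 2 * H (Suc s))"
    by (simp add: algebra_simps power2_eq_square flip: fps_const_mult fps_const_add)
  then have "H s $ t = H (Suc s) $ t - (x + y) * (if t = 0 then 0 else H (Suc s) $ (t - 1))
      + x * y * (if t < 2 then 0 else H (Suc s) $ (t - 2))"
    by (simp add: fps_X_power_mult_nth)
  then show ?thesis by (simp add: hcoef_def H_def t nat_diff_distrib)
qed

lemma hcoef_Suc_explicit:
  "hcoef x y (Suc m) (int r)
     = (\<Sum>a = 0..r. of_nat ((a + m) choose m) * x ^ a * of_nat ((r - a + m) choose m) * y ^ (r - a))"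
proof -
  have symm: "\<And>a. (a + m) choose a = (a + m) choose m"
    by (metis add_diff_cancel_left' binomial_symmetric le_add2 add.commute)
  have "hcoef x y (Suc m) (int r) = (\<Sum>a = 0..r. of_nat ((a + m) choose a) * x ^ a
      * (of_nat ((r - a + m) choose (r - a)) * y ^ (r - a)))"
    by (simp add: hcoef_def fps_mult_nth neg_binomial_fps_def algebra_simps)
  also have "\<dots> = (\<Sum>a = 0..r. of_nat ((a + m) choose m) * x ^ a * of_nat ((r - a + m) choose m) * y ^ (r - a))"
  proof (intro sum.cong refl)
    fix a
    have "(r - a + m) choose (r - a) = (r - a + m) choose m"
      by (rule symm)
    then show "of_nat ((a + m) choose a) * x ^ a * (of_nat ((r - a + m) choose (r - a)) * y ^ (r - a))
        = of_nat ((a + m) choose m) * x ^ a * of_nat ((r - a + m) choose m) * y ^ (r - a)"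
      by (simp add: symm mult_ac)
  qed
  finally show ?thesis .
qed

lemma ibinom_of_nat: "ibinom (int a) (int b) = a choose b"
  by (simp add: ibinom_def binomial_eq_0)

lemma sum_ibinom_eq_hcoef:
  assumes "m \<le> r"
  shows "(\<Sum>l = m..r. of_nat (ibinom (int l) (int m) * ibinom (int r + int m - int l) (int m))
            * x powi (int l - int m) * y powi (int r - int l))
       = hcoef x y (Suc m) (int r - int m)"
proof -
  define d where "d = r - m"
  with assms have r: "r = d + m" by simp
  have "(\<Sum>l = m..r. of_nat (ibinom (int l) (int m) * ibinom (int r + int m - int l) (int m))
            * x powi (int l - int m) * y powi (int r - int l))
      = (\<Sum>a = 0..d. of_nat (ibinom (int (a + m)) (int m) * ibinom (int r + int m - int (a + m)) (int m))
            * x powi (int (a + m) - int m) * y powi (int r - int (a + m)))"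
    unfolding r by (rule sum.shift_bounds_cl_nat_ivl[of _ 0 m d, unfolded add_0])
  also have "\<dots> = (\<Sum>a = 0..d. of_nat ((a + m) choose m) * x ^ a * of_nat ((d - a + m) choose m) * y ^ (d - a))"
  proof (intro sum.cong refl)
    fix a assume "a \<in> {0..d}"
    then have "int r + int m - int (a + m) = int (d - a + m)" "int (a + m) - int m = int a"
      "int r - int (a + m) = int (d - a)"
      using r by auto
    then show "of_nat (ibinom (int (a + m)) (int m) * ibinom (int r + int m - int (a + m)) (int m))
            * x powi (int (a + m) - int m) * y powi (int r - int (a + m))
        = of_nat ((a + m) choose m) * x ^ a * of_nat ((d - a + m) choose m) * y ^ (d - a)"
      by (simp only: ibinom_of_nat power_int_of_nat) (simp add: mult_ac)
  qed
  also have "\<dots> = hcoef x y (Suc m) (int r - int m)"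
    using hcoef_Suc_explicit[of x y m d] r by simp
  finally show ?thesis .
qed

lemma Amat_last_row:
  assumes "m < n" and "x * y \<noteq> 0"
  shows "x * y * Amat x y n (n - 1) m
       = (-1) ^ (n + m) * (hcoef x y (Suc m) (int n - 1 - int m) + hcoef x y (Suc m) (int n - int m))
         + (if m = n - 1 then (1 + x) * (1 + y) else 0)"
proof (cases "m = n - 1")
  case True
  have e0: "int n - 1 - int m = 0" and e1: "int n - int m = 1" and odd: "odd (n + m)"
    using True assms(1) by auto
  have diagonal: "x * y * Amat x y n (n - 1) m = x * y - of_nat m * (x + y)"
    using True assms by (simp add: Amat_def)
  have "(-1) ^ (n + m) * (hcoef x y (Suc m) (int n - 1 - int m) + hcoef x y (Suc m) (int n - int m))
      = - (1 + (of_nat m + 1) * (x + y))"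
    unfolding e0 e1 hcoef_at_0 hcoef_at_1 using odd by simp
  then show ?thesis
    unfolding if_P[OF True] diagonal by (simp add: algebra_simps)
next
  case False
  then have m: "m + 1 < n" using assms by simp
  let ?G = "\<lambda>l. of_nat (ibinom (int l) (int m) * ibinom (int n + int m - 1 - int l) (int m))
            * x powi (int l - int m) * y powi (int n - 1 - int l)"
  have vanishing: "?G n = 0"
    by (simp add: ibinom_def)
  have "{m..n} = insert n {m..n - 1}"
    using m by auto
  then have "(\<Sum>l = m..n. ?G l) = ?G n + (\<Sum>l = m..n - 1. ?G l)"
    using m by (simp only:) (rule sum.insert; auto)
  also have "\<dots> = (\<Sum>l = m..n - 1. ?G l)"
    by (simp only: vanishing add_0_left)
  also have "\<dots> = hcoef x y (Suc m) (int n - 1 - int m)"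
    using sum_ibinom_eq_hcoef[of m "n - 1" x y] m by (simp add: of_nat_diff algebra_simps)
  finally have last_row_sum: "(\<Sum>l = m..n. ?G l) = hcoef x y (Suc m) (int n - 1 - int m)" .
  have "Amat x y n (n - 1) m = (-1) ^ (n + m) / (x * y) *
       (\<Sum>l = m..n.
          of_nat (ibinom (int l) (int m) * ibinom (int n + int m - 1 - int l) (int m))
            * x powi (int l - int m) * y powi (int n - 1 - int l)
        + of_nat (ibinom (int l) (int m) * ibinom (int n + int m - int l) (int m))
            * x powi (int l - int m) * y powi (int n - int l))"
    using m by (simp add: Amat_def)
  also have "\<dots> = (-1) ^ (n + m) / (x * y)
      * (hcoef x y (Suc m) (int n - 1 - int m) + hcoef x y (Suc m) (int n - int m))"
    using m by (simp only: sum.distrib last_row_sum sum_ibinom_eq_hcoef)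
  finally show ?thesis using False assms(2) by simp
qed

definition hconv :: "'a::field \<Rightarrow> 'a \<Rightarrow> nat \<Rightarrow> int \<Rightarrow> 'a" where
  "hconv x y n k = (\<Sum>m<Suc n. (-1) ^ (n + m) * hcoef x y (Suc m) (int n - int m) * PPplus_total x y m k)"

lemma hconv_eq_sum_lessThan:
  assumes "n < B"
  shows "hconv x y n k = (\<Sum>m<B. (-1) ^ (n + m) * hcoef x y (Suc m) (int n - int m) * PPplus_total x y m k)"
  unfolding hconv_def
  by (rule sum.mono_neutral_left) (use assms in \<open>auto simp: hcoef_neg\<close>)

lemma hconv_neg: "k < 0 \<Longrightarrow> hconv x y n k = 0"
  by (simp add: hconv_def PPplus_total_neg)

lemma hconv_0: "hconv x y 0 k = (if 0 \<le> k then 1 else 0)"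
  by (simp add: hconv_def hcoef_at_0 PPplus_total_0)

text \<open>Expanding \<open>hcoef x y (Suc m)\<close> by \<open>hcoef_Suc\<close> and the total weights by their first-step
  recursion makes the middle terms cancel.\<close>

lemma hconv_Suc:
  assumes k: "0 \<le> k"
  shows "hconv x y (Suc n) k
       = hconv x y n (k + 1) + x * y * hconv x y n (k - 1) - x * y * (if n = 0 then 0 else hconv x y (n - 1) k)"
proof -
  define B where "B = Suc (Suc (Suc n))"
  define S1 where "S1 = (\<Sum>m<B. (-1) ^ (Suc n + m) * hcoef x y m (int (Suc n) - int m) * PPplus_total x y m k)"
  define S3 where "S3 = (\<Sum>m<B. (-1) ^ (Suc n + m) * hcoef x y (Suc m) (int n - 1 - int m) * PPplus_total x y m k)"
  have "Suc n < B" "n < B"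
    by (simp_all add: B_def)
  have "hconv x y (Suc n) k = S1 - (x + y) * hconv x y n k - x * y * S3"
    unfolding hconv_eq_sum_lessThan[OF \<open>Suc n < B\<close>] hconv_eq_sum_lessThan[OF \<open>n < B\<close>] S1_def S3_def
      sum_distrib_left sum_subtractf[symmetric]
  proof (rule sum.cong[OF refl])
    fix m
    have hcoef_step: "hcoef x y (Suc m) (int (Suc n) - int m) = hcoef x y m (int (Suc n) - int m)
        + (x + y) * hcoef x y (Suc m) (int n - int m) - x * y * hcoef x y (Suc m) (int n - 1 - int m)"
      using hcoef_Suc[of x y m "int (Suc n) - int m"] by (simp add: algebra_simps)
    show "(-1) ^ (Suc n + m) * hcoef x y (Suc m) (int (Suc n) - int m) * PPplus_total x y m k
      = (-1) ^ (Suc n + m) * hcoef x y m (int (Suc n) - int m) * PPplus_total x y m k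
        - (x + y) * ((-1) ^ (n + m) * hcoef x y (Suc m) (int n - int m) * PPplus_total x y m k)
        - x * y * ((-1) ^ (Suc n + m) * hcoef x y (Suc m) (int n - 1 - int m) * PPplus_total x y m k)"
      unfolding hcoef_step by (simp add: algebra_simps)
  qed
  moreover have "S1 = hconv x y n (k + 1) + (x + y) * hconv x y n k + x * y * hconv x y n (k - 1)"
  proof -
    have "S1 = (\<Sum>m<Suc (Suc n). (-1) ^ (n + m) * hcoef x y (Suc m) (int n - int m) *
        (PPplus_total x y m (k + 1) + (x + y) * PPplus_total x y m k + x * y * PPplus_total x y m (k - 1)))"
      unfolding S1_def B_def using k by (subst sum.lessThan_Suc_shift) (simp add: hcoef_0 PPplus_total_Suc)
    then show ?thesis
      by (simp add: sum.distrib sum_distrib_left algebra_simps hconv_eq_sum_lessThan[of n "Suc (Suc n)"])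
  qed
  moreover have "S3 = (if n = 0 then 0 else hconv x y (n - 1) k)"
  proof (cases n)
    case 0
    then show ?thesis by (simp add: S3_def hcoef_neg)
  next
    case (Suc n')
    then have "n' < B"
      by (simp add: B_def)
    have "hconv x y n' k = S3"
      unfolding S3_def hconv_eq_sum_lessThan[OF \<open>n' < B\<close>] Suc by (intro sum.cong refl) simp
    then show ?thesis
      using Suc by simp
  qed
  ultimately show ?thesis by (simp add: algebra_simps)
qed

lemma hconv_diff:
  "hconv x y n k - (if n = 0 then 0 else hconv x y (n - 1) k) = (x * y) ^ n * (if int n \<le> k then 1 else 0)"
proof (induction n arbitrary: k rule: less_induct)
  case (less n)
  show ?case
  proof (cases "k < 0")
    case True
    then show ?thesis by (simp add: hconv_neg)
  next
    case False
    then have k: "0 \<le> k" by simp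
    consider "n = 0" | "n = 1" | n' where "n = Suc (Suc n')"
      by (metis One_nat_def not0_implies_Suc)
    then show ?thesis
    proof cases
      case 1
      then show ?thesis using k by (simp add: hconv_0)
    next
      case 2
      then show ?thesis using k hconv_Suc[OF k, of x y 0] by (simp add: hconv_0)
    next
      case 3
      have IH1: "hconv x y (Suc n') k' - hconv x y n' k' = (x * y) ^ Suc n' * (if int (Suc n') \<le> k' then 1 else 0)"
        for k'
        using less.IH[of "Suc n'"] 3 by simp
      have IH0: "hconv x y n' k - (if n' = 0 then 0 else hconv x y (n' - 1) k) = (x * y) ^ n' * (if int n' \<le> k then 1 else 0)"
        using less.IH[of n'] 3 by simp
      define A where "A = (if n' = 0 then 0 else hconv x y (n' - 1) k)"
      have expand_n: "hconv x y n k = hconv x y (Suc n') (k + 1) + x * y * hconv x y (Suc n') (k - 1) - x * y * hconv x y n' k"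
        using hconv_Suc[OF k, of x y "Suc n'"] 3 by simp
      have expand_Suc_n': "hconv x y (Suc n') k = hconv x y n' (k + 1) + x * y * hconv x y n' (k - 1) - x * y * A"
        using hconv_Suc[OF k, of x y n'] unfolding A_def .
      have "hconv x y n k - hconv x y (Suc n') k
          = (hconv x y (Suc n') (k + 1) - hconv x y n' (k + 1))
            + x * y * (hconv x y (Suc n') (k - 1) - hconv x y n' (k - 1))
            - x * y * (hconv x y n' k - A)"
        unfolding expand_n expand_Suc_n' by (simp add: algebra_simps)
      also have "\<dots> = (x * y) ^ n * (if int n \<le> k then 1 else 0)"
        unfolding A_def IH1 IH0 using 3 by (auto simp: algebra_simps)
      finally show ?thesis using 3 by simp
    qed
  qed
qed

lemma last_row_times_PPplus_total:
  assumes n: "n = Suc n'" and xy: "x * y \<noteq> 0"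
  shows "(\<Sum>m<n. Amat x y n n' m * PPplus_total x y m k)
       = PPplus x y n' k 0 + (x * y) ^ n' * (if int n \<le> k then 1 else 0)"
proof -
  have "n' < Suc n"
    using n by simp
  define c where "c = (1 + x) * (1 + y)"
  define b where "b m = (-1) ^ (n + m) * (hcoef x y (Suc m) (int n - 1 - int m) + hcoef x y (Suc m) (int n - int m))"
    for m
  have "x * y * (\<Sum>m<n. Amat x y n n' m * PPplus_total x y m k)
      = (\<Sum>m<n. (b m + (if m = n' then c else 0)) * PPplus_total x y m k)"
    unfolding sum_distrib_left
  proof (rule sum.cong[OF refl])
    fix m assume "m \<in> {..<n}"
    then have "x * y * Amat x y n n' m = b m + (if m = n' then c else 0)"
      using Amat_last_row[of m n x y] xy n by (simp add: b_def c_def)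
    then show "x * y * (Amat x y n n' m * PPplus_total x y m k) = (b m + (if m = n' then c else 0)) * PPplus_total x y m k"
      by (simp only: mult.assoc[symmetric])
  qed
  also have "\<dots> = (\<Sum>m<Suc n. b m * PPplus_total x y m k) - PPplus_total x y n k + c * PPplus_total x y n' k"
    by (simp add: sum.distrib algebra_simps n if_distrib b_def hcoef_neg hcoef_at_0 cong: if_cong)
  also have "(\<Sum>m<Suc n. b m * PPplus_total x y m k) = hconv x y n k - hconv x y n' k"
    unfolding hconv_def[of x y n k] hconv_eq_sum_lessThan[OF \<open>n' < Suc n\<close>] sum_subtractf[symmetric]
    by (intro sum.cong refl) (simp_all add: b_def n algebra_simps)
  also have "\<dots> = (x * y) ^ n * (if int n \<le> k then 1 else 0)"
    using hconv_diff[of x y n k] n by simp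
  also have "PPplus_total x y n k = c * PPplus_total x y n' k - x * y * PPplus x y n' k 0"
    unfolding n c_def by (rule PPplus_total_Suc_via_zero)
  finally have "x * y * (\<Sum>m<n. Amat x y n n' m * PPplus_total x y m k)
      = x * y * (PPplus x y n' k 0 + (x * y) ^ n' * (if int n \<le> k then 1 else 0))"
    by (simp add: algebra_simps n)
  then show ?thesis
    using xy by simp
qed

definition last_row_defect :: "'a::field \<Rightarrow> 'a \<Rightarrow> nat \<Rightarrow> nat \<Rightarrow> int \<Rightarrow> 'a" where
  "last_row_defect x y n N k
     = (\<Sum>m<n. Amat x y n (n - 1) m * PPplus_total x y (m + N) k) - PPplus x y (n - 1 + N) k 0"

lemma last_row_defect_neg: "k < 0 \<Longrightarrow> last_row_defect x y n N k = 0"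
  by (simp add: last_row_defect_def PPplus_total_neg PPplus_neg)

lemma last_row_defect_Suc:
  "0 \<le> k \<Longrightarrow> last_row_defect x y n (Suc N) k
     = last_row_defect x y n N (k + 1) + (x + y) * last_row_defect x y n N k
       + x * y * last_row_defect x y n N (k - 1)"
  unfolding last_row_defect_def
  by (simp add: PPplus_total_Suc PPplus_Suc sum.distrib sum_distrib_left algebra_simps sum_subtractf)

text \<open>The defect obeys the same first-step recursion as \<open>PP_above\<close>; the bound \<open>N \<le> n\<close>
  ensures that \<open>PP_above\<close> vanishes where the defect does, namely at height \<open>-1\<close>.\<close>

lemma last_row_defect_eq_PP_above:
  assumes "n = Suc n'" and "x * y \<noteq> 0" and "N \<le> n" and "0 \<le> k"
  shows "last_row_defect x y n N k = (x * y) ^ n' * PP_above x y N k (int n)"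
  using assms(3,4)
proof (induction N arbitrary: k)
  case 0
  then show ?case
    using last_row_times_PPplus_total[OF assms(1,2), of k] assms(1)
    by (simp add: last_row_defect_def PP_above_0)
next
  case (Suc N)
  have IH: "last_row_defect x y n N k' = (x * y) ^ n' * PP_above x y N k' (int n)" for k'
  proof (cases "0 \<le> k'")
    case True
    then show ?thesis using Suc by simp
  next
    case False
    then show ?thesis
      using Suc.prems by (simp add: last_row_defect_neg PP_above_unreachable)
  qed
  show ?case
    unfolding last_row_defect_Suc[OF Suc.prems(2)] PP_above_Suc IH by (simp add: algebra_simps)
qed

lemma upper_row_times_PPplus_total:
  assumes "i + 1 < n" and "x * y \<noteq> 0"
  shows "(\<Sum>m<n. Amat x y n i m * PPplus_total x y (m + N) k) = PPplus x y (i + N) k 0"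
proof -
  define a where "a = (1 + x) * (1 + y) / (x * y)"
  define b where "b = - 1 / (x * y)"
  have entries: "Amat x y n i m = (if m = i then a else if m = i + 1 then b else 0)" for m
  proof -
    have "i < n - 1" "i \<noteq> n - 1" using assms(1) by simp_all
    then show ?thesis by (cases "m = i") (simp_all add: Amat_def a_def b_def)
  qed
  have "(\<Sum>m<n. Amat x y n i m * PPplus_total x y (m + N) k)
      = (\<Sum>m<n. (if m = i then a * PPplus_total x y (i + N) k else 0)
                + (if m = i + 1 then b * PPplus_total x y (Suc (i + N)) k else 0))"
    by (intro sum.cong refl) (simp add: entries)
  also have "\<dots> = a * PPplus_total x y (i + N) k + b * PPplus_total x y (Suc (i + N)) k"
    using assms(1) by (simp add: sum.distrib)
  also have "\<dots> = PPplus x y (i + N) k 0"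
    unfolding PPplus_total_Suc_via_zero a_def b_def using assms(2) by (simp add: field_simps)
  finally show ?thesis .
qed

theorem lemma12:
  fixes x y :: "'a::field" and n k :: nat
  assumes "x \<noteq> 0" and "y \<noteq> 0" and "n \<ge> 1"
  shows "\<forall>i<n. \<forall>j<n.
    (\<Sum>m<n. Amat x y n i m * (Sum_any (\<lambda>l::nat. PPplus x y (m + j + 1) (int k) (int l))))
    = PPplus x y (i + j + 1) (int k) 0
      + (if i + 1 < n then 0
         else (x * y) ^ (n - 1) *
              Sum_any (\<lambda>l::nat. PP x y (j + 1) 0 (int n - int k + int l)))"
proof (intro allI impI)
  fix i j assume "i < n" and "j < n"
  obtain n' where n: "n = Suc n'" using \<open>n \<ge> 1\<close> by (cases n) auto
  have xy: "x * y \<noteq> 0" using assms by simp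
  have "(\<Sum>m<n. Amat x y n i m * (Sum_any (\<lambda>l::nat. PPplus x y (m + j + 1) (int k) (int l))))
      = (\<Sum>m<n. Amat x y n i m * PPplus_total x y (m + Suc j) (int k))"
    by (simp add: Sum_any_PPplus)
  moreover have "(\<Sum>m<n. Amat x y n i m * PPplus_total x y (m + Suc j) (int k))
      = PPplus x y (i + Suc j) (int k) 0 + (x * y) ^ n' * PP_above x y (Suc j) (int k) (int n)"
    if "\<not> i + 1 < n"
  proof -
    have "i = n'" using that \<open>i < n\<close> n by simp
    then show ?thesis
      using last_row_defect_eq_PP_above[OF n xy, of "Suc j" "int k"] \<open>j < n\<close> n
      by (simp add: last_row_defect_def diff_eq_eq ac_simps)
  qed
  ultimately show "(\<Sum>m<n. Amat x y n i m * (Sum_any (\<lambda>l::nat. PPplus x y (m + j + 1) (int k) (int l))))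
    = PPplus x y (i + j + 1) (int k) 0
      + (if i + 1 < n then 0
         else (x * y) ^ (n - 1) * Sum_any (\<lambda>l::nat. PP x y (j + 1) 0 (int n - int k + int l)))"
    using upper_row_times_PPplus_total[OF _ xy, of i n "Suc j" "int k"] n by (simp add: Sum_any_PP)
qed

end
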